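(* Let $k\geq 2$ be an integer and $g_k(x)=xf_{k-1}(x)/f_k(x)$. Then $g_k'(x)>0$ for every $x>0$.
   Context: $f_t(x)=e^{-x}\sum_{i\geq t}x^i/i!$. *)

theory Defs
  imports Complex_Main
begin

definition f_tail :: "nat \<Rightarrow> real \<Rightarrow> real" where
  "f_tail t x = exp (- x) * (\<Sum>i. if t \<le> i then x ^ i / fact i else 0)"

definition g_ratio :: "nat \<Rightarrow> real \<Rightarrow> real" where
  "g_ratio k x = x * f_tail (k - 1) x / f_tail k x"

end

theory Submission
  imports Defs
begin

text \<open>Write E_t(x) = sum_{i >= t} x^i/i!, so that f_t = e^{-x} E_t, E_t' = E_{t-1} and
  g_k(x) = x E_{k-1}(x) / E_k(x). Then x E_k^2 g_k' = S_0 S_2 - S_1^2, where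
  S_j = sum_{i >= k} i^j x^i/i! are the moments of the weights x^i/i! on i >= k: indeed S_0 = E_k, S_1 = x E_{k-1} and S_2 = x^2 E_{k-2} + x E_{k-1}. This is S_0^2
  times the variance of i under these weights, which is positive because the weights are
  positive at more than one index.\<close>

lemma moments_variance_pos:
  fixes w a :: "nat \<Rightarrow> real"
  assumes S0: "w sums S0" and S1: "(\<lambda>i. a i * w i) sums S1"
    and S2: "(\<lambda>i. (a i)\<^sup>2 * w i) sums S2"
    and nonneg: "\<And>i. w i \<ge> 0" and "w m > 0" and "w n > 0" and "a m \<noteq> a n"
  shows "S1\<^sup>2 < S0 * S2"
proof -
  have "S0 > 0"
    using suminf_pos2[OF sums_summable[OF S0] nonneg \<open>w m > 0\<close>] sums_unique[OF S0] by simp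
  define \<mu> where "\<mu> = S1 / S0"
  obtain j where j: "w j > 0" "a j \<noteq> \<mu>"
    using \<open>w m > 0\<close> \<open>w n > 0\<close> \<open>a m \<noteq> a n\<close> by metis
  have "(\<lambda>i. (a i)\<^sup>2 * w i - (2 * \<mu>) * (a i * w i) + \<mu>\<^sup>2 * w i) sums (S2 - 2 * \<mu> * S1 + \<mu>\<^sup>2 * S0)"
    by (intro sums_add sums_diff sums_mult S0 S1 S2)
  then have var: "(\<lambda>i. (a i - \<mu>)\<^sup>2 * w i) sums (S2 - 2 * \<mu> * S1 + \<mu>\<^sup>2 * S0)"
    by (simp add: power2_eq_square algebra_simps)
  have "0 < S2 - 2 * \<mu> * S1 + \<mu>\<^sup>2 * S0"
    using suminf_pos2[OF sums_summable[OF var], of j] sums_unique[OF var] nonneg j by simp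
  also have "\<dots> = (S0 * S2 - S1\<^sup>2) / S0"
    using \<open>S0 > 0\<close> by (simp add: \<mu>_def field_simps power2_eq_square)
  finally show ?thesis
    using \<open>S0 > 0\<close> by (simp add: zero_less_divide_iff)
qed

definition exp_tail :: "nat \<Rightarrow> real \<Rightarrow> real" where
  "exp_tail t x = exp x - (\<Sum>i<t. x ^ i / fact i)"

definition exp_tail_term :: "nat \<Rightarrow> real \<Rightarrow> nat \<Rightarrow> real" where
  "exp_tail_term t x i = (if t \<le> i then x ^ i / fact i else 0)"

lemma exp_tail_sums: "exp_tail_term t x sums exp_tail t x"
proof -
  have "(\<lambda>i. x ^ i / fact i) sums exp x"
    using exp_converges[of x] by (simp add: divide_inverse mult.commute)
  moreover have "(\<lambda>i. if i \<in> {..<t} then x ^ i / fact i else 0) sums (\<Sum>i<t. x ^ i / fact i)"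
    by (rule sums_If_finite_set) simp
  ultimately have "(\<lambda>i. x ^ i / fact i - (if i \<in> {..<t} then x ^ i / fact i else 0)) sums exp_tail t x"
    unfolding exp_tail_def by (rule sums_diff)
  moreover have "(\<lambda>i. x ^ i / fact i - (if i \<in> {..<t} then x ^ i / fact i else 0)) = exp_tail_term t x"
    by (auto simp: fun_eq_iff exp_tail_term_def)
  ultimately show ?thesis by simp
qed

lemma exp_tail_pos:
  assumes "x > 0" shows "exp_tail t x > 0"
proof -
  have "0 < suminf (exp_tail_term t x)"
    by (rule suminf_pos2[where i = t])
      (use sums_summable[OF exp_tail_sums] assms in \<open>auto simp: exp_tail_term_def\<close>)
  then show ?thesis
    using sums_unique[OF exp_tail_sums] by simp
qed

lemma f_tail_eq_exp_tail: "f_tail t x = exp (- x) * exp_tail t x"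
proof -
  have "(\<lambda>i. if t \<le> i then x ^ i / fact i else 0) = exp_tail_term t x"
    by (simp add: fun_eq_iff exp_tail_term_def)
  then show ?thesis
    using sums_unique[OF exp_tail_sums[of t x]] by (simp add: f_tail_def)
qed

lemma has_real_derivative_exp_partial_sum:
  "((\<lambda>y. \<Sum>i<Suc m. y ^ i / fact i) has_real_derivative (\<Sum>i<m. x ^ i / fact i)) (at x)"
proof (induction m)
  case 0
  then show ?case by simp
next
  case (Suc m)
  have "((\<lambda>y. y ^ Suc m / fact (Suc m)) has_real_derivative real (Suc m) * x ^ m / fact (Suc m)) (at x)"
  proof (rule DERIV_cdivide)
    show "((\<lambda>y. y ^ Suc m) has_real_derivative real (Suc m) * x ^ m) (at x)"
      using DERIV_pow[of "Suc m" x UNIV] by simp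
  qed
  moreover have "real (Suc m) * x ^ m / fact (Suc m) = x ^ m / fact m"
    by (simp add: fact_Suc del: of_nat_Suc)
  ultimately show ?case
    using DERIV_add[OF Suc.IH] by simp
qed

lemma has_real_derivative_exp_tail:
  "(exp_tail (Suc t) has_real_derivative exp_tail t x) (at x)"
  unfolding exp_tail_def
  using DERIV_diff[OF DERIV_exp has_real_derivative_exp_partial_sum] by simp

lemma exp_tail_term_Suc_shift:
  "real (Suc j) * exp_tail_term (Suc t) x (Suc j) = x * exp_tail_term t x j"
  by (simp add: exp_tail_term_def fact_Suc del: of_nat_Suc)

lemma exp_tail_first_moment:
  "(\<lambda>i. real i * exp_tail_term (Suc t) x i) sums (x * exp_tail t x)"
proof -
  have "(\<lambda>j. x * exp_tail_term t x j) sums (x * exp_tail t x)"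
    by (intro sums_mult exp_tail_sums)
  then have "(\<lambda>j. real (Suc j) * exp_tail_term (Suc t) x (Suc j)) sums (x * exp_tail t x)"
    by (simp only: exp_tail_term_Suc_shift)
  then show ?thesis
    by (subst (asm) sums_Suc_iff) simp
qed

lemma exp_tail_second_moment:
  "(\<lambda>i. (real i)\<^sup>2 * exp_tail_term (Suc (Suc t)) x i)
     sums (x\<^sup>2 * exp_tail t x + x * exp_tail (Suc t) x)"
proof -
  have "(\<lambda>j. x * (real j * exp_tail_term (Suc t) x j + exp_tail_term (Suc t) x j))
          sums (x * (x * exp_tail t x + exp_tail (Suc t) x))"
    by (intro sums_mult sums_add exp_tail_first_moment exp_tail_sums)
  moreover have "(real (Suc j))\<^sup>2 * exp_tail_term (Suc (Suc t)) x (Suc j)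
      = x * (real j * exp_tail_term (Suc t) x j + exp_tail_term (Suc t) x j)" for j
  proof -
    have "(real (Suc j))\<^sup>2 * exp_tail_term (Suc (Suc t)) x (Suc j)
        = real (Suc j) * (x * exp_tail_term (Suc t) x j)"
      by (simp only: power2_eq_square mult.assoc exp_tail_term_Suc_shift)
    then show ?thesis
      by (simp add: algebra_simps)
  qed
  ultimately have "(\<lambda>j. (real (Suc j))\<^sup>2 * exp_tail_term (Suc (Suc t)) x (Suc j))
      sums (x\<^sup>2 * exp_tail t x + x * exp_tail (Suc t) x)"
    by (simp only:) (simp add: power2_eq_square algebra_simps)
  then show ?thesis
    by (subst (asm) sums_Suc_iff) simp
qed

lemma has_real_derivative_g_ratio:
  assumes "x > 0"
  shows "(g_ratio (Suc (Suc t)) has_real_derivative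
      ((exp_tail (Suc t) x + x * exp_tail t x) * exp_tail (Suc (Suc t)) x - x * (exp_tail (Suc t) x)\<^sup>2)
        / (exp_tail (Suc (Suc t)) x)\<^sup>2) (at x)"
proof -
  have "g_ratio (Suc (Suc t)) = (\<lambda>y. y * exp_tail (Suc t) y / exp_tail (Suc (Suc t)) y)"
    by (simp add: fun_eq_iff g_ratio_def f_tail_eq_exp_tail)
  then show ?thesis
    using DERIV_divide[OF DERIV_mult[OF DERIV_ident has_real_derivative_exp_tail[of t x]]
        has_real_derivative_exp_tail[of "Suc t" x]] exp_tail_pos[OF assms, of "Suc (Suc t)"]
    by (simp add: power2_eq_square mult_ac)
qed

theorem lemma37:
  fixes k :: nat and x :: real
  assumes "k \<ge> 2" and "x > 0"
  shows "\<exists>D. (g_ratio k has_real_derivative D) (at x) \<and> D > 0"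
proof -
  obtain t where k: "k = Suc (Suc t)"
    using \<open>k \<ge> 2\<close> by (metis add_2_eq_Suc le_Suc_ex)
  let ?E = "\<lambda>s. exp_tail s x"
  have "(x * ?E (Suc t))\<^sup>2 < ?E k * (x\<^sup>2 * ?E t + x * ?E (Suc t))"
  proof (rule moments_variance_pos[where m = k and n = "Suc k"])
    show "exp_tail_term k x sums ?E k"
      by (rule exp_tail_sums)
    show "(\<lambda>i. real i * exp_tail_term k x i) sums (x * ?E (Suc t))"
      unfolding k by (rule exp_tail_first_moment)
    show "(\<lambda>i. (real i)\<^sup>2 * exp_tail_term k x i) sums (x\<^sup>2 * ?E t + x * ?E (Suc t))"
      unfolding k by (rule exp_tail_second_moment)
  qed (use \<open>x > 0\<close> in \<open>simp_all add: exp_tail_term_def\<close>)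
  then have "x * (x * (?E (Suc t))\<^sup>2) < x * ((?E (Suc t) + x * ?E t) * ?E k)"
    by (simp add: power2_eq_square algebra_simps)
  then have "0 < (?E (Suc t) + x * ?E t) * ?E k - x * (?E (Suc t))\<^sup>2"
    using \<open>x > 0\<close> by simp
  then show ?thesis
    using has_real_derivative_g_ratio[OF \<open>x > 0\<close>, of t] exp_tail_pos[OF \<open>x > 0\<close>, of k]
    unfolding k by auto
qed

end
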